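(* Suppose that $\|\tilde{\mu}_{m}-\mu\|_\infty=\mathcal{O}_{\mathrm{P}}(a_m)$ and $\|\tilde{\pi}_{m}-\pi\|_\infty=\mathcal{O}_{\mathrm{P}}(a_m)$ for sufficiently large $m$, where $\{a_m\}$ is a deterministic sequence with $a_m\to 0$. Suppose in addition that, for sufficiently large $m$ and conditionally on the fitted function $\tilde{\mu}_{m}(\cdot)$, the joint density $b_m(x,u)$ of $(\mu(Z),\eta_m(Z))$, where $\eta_m=a_m^{-1}(\tilde{\mu}_{m}-\mu)$, and its partial derivatives $\partial_x b_m(x,u)$, $\partial_x^2 b_m(x,u)$ exist for all $x,u$ and there are non-negative functions $\bar b_{m,i}(u)$, $i=0,1,2$, with $b_m(x,u)\le \bar b_{m,0}(u)$, $|\partial_x b_m(x,u)|\le \bar b_{m,1}(u)$, $|\partial_x^2 b_m(x,u)|\le \bar b_{m,2}(u)$ for all $x,u$ and $\sup_m\int_{\mathbb{R}}|u|^r\bar b_{m,i}(u)\,du<\infty$ for $r=0,1,2,3$ and $i=0,1,2$. Suppose also that $f_\mu(q)>0$. Then $\tilde{q}_{m}-q=\mathcal{O}_{\mathrm{P}}(a_m)$.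
   Context: $Z$ denotes the risk factors, $\mu(z)=\mathrm{E}[X\mid Z=z]$ and $\pi(z)=\mathrm{E}[Y\mid Z=z]$ are portfolio loss functions, and $\tilde{\mu}_{m},\tilde{\pi}_{m}$ are approximations of them fitted in a first stage from $m$ outer-level scenarios (each with inner-level observations). $\|\cdot\|_\infty$ is the essential supremum norm over the domain of $Z$ w.r.t. its distribution. $q$ is the $\alpha$-VaR of $\mu(Z)$, i.e. $\Pr\{\mu(Z)\le q\}=\alpha$, and $\tilde{q}_{m}$ is the $\alpha$-VaR of $\tilde{\mu}_{m}(Z)$ conditionally on the fitted functions, i.e. $\mathrm{Pr}_m\{\tilde{\mu}_{m}(Z)\le \tilde{q}_{m}\}=\alpha$, where $\mathrm{Pr}_m$ is probability conditional on $\tilde{\mu}_{m},\tilde{\pi}_{m}$. $f_\mu$ is the density of $\mu(Z)$. *)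

theory Defs
  imports "HOL-Probability.Probability"
begin

definition sup_norm :: "'z measure \<Rightarrow> ('z \<Rightarrow> real) \<Rightarrow> ereal" where
  "sup_norm PZ f = esssup PZ (\<lambda>z. ereal \<bar>f z\<bar>)"

text \<open>Stochastic boundedness X_m = O_P(a_m) on the first-stage probability space M
  (outer probability, so no measurability of the events is presupposed).\<close>
definition bigOP :: "'o measure \<Rightarrow> (nat \<Rightarrow> 'o \<Rightarrow> ereal) \<Rightarrow> (nat \<Rightarrow> real) \<Rightarrow> bool" where
  "bigOP M X a \<longleftrightarrow>
     (\<forall>\<epsilon>>0. \<exists>K N. \<forall>m\<ge>N. \<exists>A\<in>sets M.
        {\<omega>\<in>space M. X m \<omega> > ereal (K * a m)} \<subseteq> A \<and> measure M A < \<epsilon>)"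

definition VaR :: "'z measure \<Rightarrow> real \<Rightarrow> ('z \<Rightarrow> real) \<Rightarrow> real" where
  "VaR P \<alpha> X = Inf {x. measure P {z\<in>space P. X z \<le> x} \<ge> \<alpha>}"

end

theory Submission
  imports Defs "HOL-Probability.Distribution_Functions"
begin

text \<open>The \<open>\<alpha>\<close>-VaR is 1-Lipschitz with respect to the essential supremum norm: if
  \<open>\<bar>X - Y\<bar> \<le> c\<close> almost surely then \<open>{X \<le> x} \<subseteq> {Y \<le> x + c}\<close> up to a null set, so shifting
  the quantile level set by \<open>c\<close> moves its infimum by at most \<open>c\<close>. Hence
  \<open>\<bar>q\<^sub>m - q\<bar> \<le> \<parallel>\<mu>\<^sub>m - \<mu>\<parallel>\<^sub>\<infinity>\<close> pointwise on the first-stage space, and the rate of the fitted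
  loss function transfers to the quantile.\<close>

context prob_space
begin

lemma cdf_distr_eq_measure_le:
  fixes X :: "'a \<Rightarrow> real"
  assumes "X \<in> borel_measurable M"
  shows "cdf (distr M borel X) x = measure M {z\<in>space M. X z \<le> x}"
  unfolding cdf_def2 using assms
  by (subst measure_distr) (auto intro!: arg_cong[where f="measure M"])

lemma VaR_level_set_nonempty:
  fixes X :: "'a \<Rightarrow> real"
  assumes X: "X \<in> borel_measurable M" and "\<alpha> < 1"
  shows "{x. \<alpha> \<le> measure M {z\<in>space M. X z \<le> x}} \<noteq> {}"
proof -
  interpret D: real_distribution "distr M borel X" using X by simp
  have "eventually (\<lambda>x. \<alpha> < cdf (distr M borel X) x) at_top"
    using D.cdf_lim_at_top_prob \<open>\<alpha> < 1\<close> by (rule order_tendstoD)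
  then obtain x where "\<alpha> < cdf (distr M borel X) x"
    by (auto simp: eventually_at_top_linorder)
  then have "x \<in> {x. \<alpha> \<le> measure M {z\<in>space M. X z \<le> x}}"
    using cdf_distr_eq_measure_le[OF X] by simp
  then show ?thesis by blast
qed

lemma bdd_below_VaR_level_set:
  fixes X :: "'a \<Rightarrow> real"
  assumes X: "X \<in> borel_measurable M" and "0 < \<alpha>"
  shows "bdd_below {x. \<alpha> \<le> measure M {z\<in>space M. X z \<le> x}}"
proof -
  interpret D: real_distribution "distr M borel X" using X by simp
  have "eventually (\<lambda>x. cdf (distr M borel X) x < \<alpha>) at_bot"
    using D.cdf_lim_at_bot \<open>0 < \<alpha>\<close> by (rule order_tendstoD)
  then obtain L where L: "\<And>x. x \<le> L \<Longrightarrow> cdf (distr M borel X) x < \<alpha>"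
    by (auto simp: eventually_at_bot_linorder)
  have "L \<le> x" if "x \<in> {x. \<alpha> \<le> measure M {z\<in>space M. X z \<le> x}}" for x
    using that L[of x] cdf_distr_eq_measure_le[OF X, of x] by force
  then show ?thesis by (rule bdd_belowI)
qed

lemma VaR_le_shift:
  fixes X Y :: "'a \<Rightarrow> real"
  assumes X: "X \<in> borel_measurable M" and Y: "Y \<in> borel_measurable M"
    and \<alpha>: "0 < \<alpha>" "\<alpha> < 1"
    and le: "AE z in M. X z \<le> Y z + c"
  shows "VaR M \<alpha> X \<le> VaR M \<alpha> Y + c"
proof -
  let ?SX = "{x. \<alpha> \<le> measure M {z\<in>space M. X z \<le> x}}"
  let ?SY = "{x. \<alpha> \<le> measure M {z\<in>space M. Y z \<le> x}}"
  have "Inf ?SX - c \<le> Inf ?SY"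
  proof (rule cInf_greatest)
    show "?SY \<noteq> {}" using VaR_level_set_nonempty[OF Y \<alpha>(2)] .
  next
    fix y assume "y \<in> ?SY"
    moreover have "measure M {z\<in>space M. Y z \<le> y} \<le> measure M {z\<in>space M. X z \<le> y + c}"
      using le X by (intro finite_measure_mono_AE) (auto elim!: AE_mp)
    ultimately have "y + c \<in> ?SX" by simp
    then have "Inf ?SX \<le> y + c"
      using bdd_below_VaR_level_set[OF X \<alpha>(1)] by (rule cInf_lower)
    then show "Inf ?SX - c \<le> y" by simp
  qed
  then show ?thesis unfolding VaR_def by simp
qed

lemma AE_abs_le_sup_norm:
  assumes "sup_norm M f \<le> ereal c"
  shows "AE z in M. \<bar>f z\<bar> \<le> c"
  using esssup_AE[of "\<lambda>z. ereal \<bar>f z\<bar>" M] assms unfolding sup_norm_def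
proof -
  have "AE z in M. ereal \<bar>f z\<bar> \<le> ereal c"
    using esssup_AE[of "\<lambda>z. ereal \<bar>f z\<bar>" M] assms unfolding sup_norm_def
    by (elim AE_mp) (intro AE_I2 impI, erule order_trans)
  then show ?thesis by simp
qed

lemma VaR_dist_le_sup_norm:
  fixes X Y :: "'a \<Rightarrow> real"
  assumes X: "X \<in> borel_measurable M" and Y: "Y \<in> borel_measurable M"
    and \<alpha>: "0 < \<alpha>" "\<alpha> < 1"
  shows "ereal \<bar>VaR M \<alpha> X - VaR M \<alpha> Y\<bar> \<le> sup_norm M (\<lambda>z. X z - Y z)"
proof (rule ereal_le_real)
  fix c assume "sup_norm M (\<lambda>z. X z - Y z) \<le> ereal c"
  then have "AE z in M. \<bar>X z - Y z\<bar> \<le> c" by (rule AE_abs_le_sup_norm)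
  then have "VaR M \<alpha> X \<le> VaR M \<alpha> Y + c" "VaR M \<alpha> Y \<le> VaR M \<alpha> X + c"
    by (auto intro!: VaR_le_shift X Y \<alpha> elim: AE_mp)
  then show "ereal \<bar>VaR M \<alpha> X - VaR M \<alpha> Y\<bar> \<le> ereal c" by simp
qed

end

lemma bigOP_mono:
  assumes "bigOP M Y a" and "\<And>m \<omega>. N \<le> m \<Longrightarrow> \<omega> \<in> space M \<Longrightarrow> X m \<omega> \<le> Y m \<omega>"
  shows "bigOP M X a"
  unfolding bigOP_def
proof (intro allI impI)
  fix \<epsilon> :: real assume "0 < \<epsilon>"
  then obtain K N' where K: "\<forall>m\<ge>N'. \<exists>A\<in>sets M.
      {\<omega>\<in>space M. ereal (K * a m) < Y m \<omega>} \<subseteq> A \<and> measure M A < \<epsilon>"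
    using assms(1) unfolding bigOP_def by blast
  have "\<forall>m\<ge>max N N'. \<exists>A\<in>sets M.
      {\<omega>\<in>space M. ereal (K * a m) < X m \<omega>} \<subseteq> A \<and> measure M A < \<epsilon>"
  proof (intro allI impI)
    fix m assume "max N N' \<le> m"
    with K obtain A where "A \<in> sets M" "measure M A < \<epsilon>"
      and "{\<omega>\<in>space M. ereal (K * a m) < Y m \<omega>} \<subseteq> A" by auto
    moreover have "{\<omega>\<in>space M. ereal (K * a m) < X m \<omega>} \<subseteq> {\<omega>\<in>space M. ereal (K * a m) < Y m \<omega>}"
      using assms(2) \<open>max N N' \<le> m\<close> by (auto intro: less_le_trans)
    ultimately show "\<exists>A\<in>sets M. {\<omega>\<in>space M. ereal (K * a m) < X m \<omega>} \<subseteq> A \<and> measure M A < \<epsilon>"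
      by blast
  qed
  then show "\<exists>K N. \<forall>m\<ge>N. \<exists>A\<in>sets M.
      {\<omega>\<in>space M. ereal (K * a m) < X m \<omega>} \<subseteq> A \<and> measure M A < \<epsilon>" by blast
qed

lemma borel_measurable_of_normalized_error:
  fixes \<mu> \<nu> :: "'a \<Rightarrow> real"
  assumes "(\<lambda>z. (\<mu> z, (\<nu> z - \<mu> z) / s)) \<in> M \<rightarrow>\<^sub>M lborel \<Otimes>\<^sub>M lborel" and "s \<noteq> 0"
  shows "\<nu> \<in> borel_measurable M"
proof -
  have "\<mu> \<in> borel_measurable M" and "(\<lambda>z. (\<nu> z - \<mu> z) / s) \<in> borel_measurable M"
    using measurable_compose[OF assms(1) measurable_fst]
      measurable_compose[OF assms(1) measurable_snd] by simp_all
  then have "(\<lambda>z. \<mu> z + s * ((\<nu> z - \<mu> z) / s)) \<in> borel_measurable M" by measurable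
  also have "(\<lambda>z. \<mu> z + s * ((\<nu> z - \<mu> z) / s)) = \<nu>"
    using \<open>s \<noteq> 0\<close> by auto
  finally show ?thesis .
qed

theorem proposition2:
  fixes M :: "'o measure" and PZ :: "'z measure"
    and \<mu> \<pi> :: "'z \<Rightarrow> real"
    and \<mu>t \<pi>t :: "nat \<Rightarrow> 'o \<Rightarrow> 'z \<Rightarrow> real"
    and a :: "nat \<Rightarrow> real" and \<alpha> :: real
    and b b1 b2 :: "nat \<Rightarrow> 'o \<Rightarrow> real \<Rightarrow> real \<Rightarrow> real"
    and bbar :: "nat \<Rightarrow> nat \<Rightarrow> real \<Rightarrow> real"
    and f\<mu> :: "real \<Rightarrow> real"
  assumes M: "prob_space M" and PZ: "prob_space PZ"
    and \<alpha>: "0 < \<alpha>" "\<alpha> < 1"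
    and \<mu>_meas: "\<mu> \<in> borel_measurable PZ" and \<pi>_meas: "\<pi> \<in> borel_measurable PZ"
    and a_pos: "\<forall>m. 0 < a m" and a_lim: "a \<longlonglongrightarrow> 0"
    and rate_\<mu>: "bigOP M (\<lambda>m \<omega>. sup_norm PZ (\<lambda>z. \<mu>t m \<omega> z - \<mu> z)) a"
    and rate_\<pi>: "bigOP M (\<lambda>m \<omega>. sup_norm PZ (\<lambda>z. \<pi>t m \<omega> z - \<pi> z)) a"
    and dens: "\<exists>N. \<forall>m\<ge>N. \<forall>\<omega>\<in>space M.
        distributed PZ (lborel \<Otimes>\<^sub>M lborel)
          (\<lambda>z. (\<mu> z, (\<mu>t m \<omega> z - \<mu> z) / a m))
          (\<lambda>(x, u). ennreal (b m \<omega> x u))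
      \<and> (\<forall>x u. 0 \<le> b m \<omega> x u)
      \<and> (\<forall>x u. ((\<lambda>x. b m \<omega> x u) has_real_derivative b1 m \<omega> x u) (at x))
      \<and> (\<forall>x u. ((\<lambda>x. b1 m \<omega> x u) has_real_derivative b2 m \<omega> x u) (at x))
      \<and> (\<forall>x u. b m \<omega> x u \<le> bbar m 0 u)
      \<and> (\<forall>x u. \<bar>b1 m \<omega> x u\<bar> \<le> bbar m 1 u)
      \<and> (\<forall>x u. \<bar>b2 m \<omega> x u\<bar> \<le> bbar m 2 u)"
    and bbar_nonneg: "\<exists>N. \<forall>m\<ge>N. \<forall>i\<le>2. \<forall>u. 0 \<le> bbar m i u"
    and bbar_int: "\<exists>N C. \<forall>m\<ge>N. \<forall>i\<le>2. \<forall>r\<le>(3::nat).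
        (\<integral>\<^sup>+ u. ennreal (\<bar>u\<bar> ^ r * bbar m i u) \<partial>lborel) \<le> ennreal C"
    and f\<mu>_dens: "distributed PZ lborel \<mu> (\<lambda>x. ennreal (f\<mu> x))"
    and f\<mu>_cont: "continuous_on UNIV f\<mu>"
    and f\<mu>_pos: "f\<mu> (VaR PZ \<alpha> \<mu>) > 0"
  shows "bigOP M (\<lambda>m \<omega>. ereal \<bar>VaR PZ \<alpha> (\<mu>t m \<omega>) - VaR PZ \<alpha> \<mu>\<bar>) a"
proof -
  interpret PZ: prob_space PZ by (rule PZ)
  obtain N where N: "\<And>m \<omega>. N \<le> m \<Longrightarrow> \<omega> \<in> space M \<Longrightarrow>
      distributed PZ (lborel \<Otimes>\<^sub>M lborel) (\<lambda>z. (\<mu> z, (\<mu>t m \<omega> z - \<mu> z) / a m))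
        (\<lambda>(x, u). ennreal (b m \<omega> x u))"
    using dens by blast
  show ?thesis
  proof (rule bigOP_mono[OF rate_\<mu>])
    fix m \<omega> assume "N \<le> m" "\<omega> \<in> space M"
    then have "\<mu>t m \<omega> \<in> borel_measurable PZ"
      using a_pos by (intro borel_measurable_of_normalized_error[OF distributed_measurable[OF N]])
        (auto simp: less_imp_neq[symmetric])
    then show "ereal \<bar>VaR PZ \<alpha> (\<mu>t m \<omega>) - VaR PZ \<alpha> \<mu>\<bar> \<le> sup_norm PZ (\<lambda>z. \<mu>t m \<omega> z - \<mu> z)"
      using \<mu>_meas \<alpha> by (rule PZ.VaR_dist_le_sup_norm)
  qed
qed

end
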